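(* Let $k$ be an algebraically closed field of characteristic $p>0$. Let $H$ be a finite group whose order is divisible by $p$ and which is generated by its elements of order prime to $p$. Let $r\neq p$ be a prime and let $A$ be a finite irreducible $\mathbb{F}_rH$-module (an elementary abelian $r$-group with $H$-action) such that $H$ has a regular orbit on $\mathrm{Hom}(A,k^* )$. Let $G = A\rtimes H$. Let $W$ be a $1$-dimensional $kA$-module affording a character $\lambda\in\mathrm{Hom}(A,k^* )$ lying in a regular $H$-orbit, and let $V = \mathrm{Ind}_A^G(W)$. Then $(G,V)$ is not weakly adequate.
   Context: For a representation $\rho:G\to\mathrm{GL}(V)$, $(G,V)$ is weakly adequate if $\mathrm{End}_k(V)$ is spanned by $\{\rho(g): g\in G,\ \rho(g)\text{ semisimple}\}$. A regular orbit is one on which $H$ acts with trivial stabilizers. *)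

theory Defs
  imports "HOL-Algebra.Group_Action" "HOL-Algebra.Generated_Groups"
    "HOL-Algebra.Multiplicative_Group" "HOL-Computational_Algebra.Polynomial"
begin

definition alg_closed :: "'k::field itself \<Rightarrow> bool" where
  "alg_closed _ \<longleftrightarrow> (\<forall>q :: 'k poly. degree q > 0 \<longrightarrow> (\<exists>x. poly q x = 0))"

(* Linear algebra on k^I for a finite index set I (functions vanishing outside I);
   matrices are functions on I x I (vanishing outside), entry (i,j) = coefficient
   of e_i in the image of e_j. *)
definition fspan :: "('x \<Rightarrow> 'k::field) set \<Rightarrow> ('x \<Rightarrow> 'k) set" where
  "fspan S = {v. \<exists>F c. finite F \<and> F \<subseteq> S \<and> v = (\<lambda>x. \<Sum>u\<in>F. c u * u x)}"

definition vecs :: "'i set \<Rightarrow> ('i \<Rightarrow> 'k::field) set" where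
  "vecs I = {v. \<forall>i. i \<notin> I \<longrightarrow> v i = 0}"

definition endos :: "'i set \<Rightarrow> ('i \<times> 'i \<Rightarrow> 'k::field) set" where
  "endos I = {M. \<forall>i j. (i \<notin> I \<or> j \<notin> I) \<longrightarrow> M (i, j) = 0}"

definition mat_vec :: "'i set \<Rightarrow> ('i \<times> 'i \<Rightarrow> 'k::field) \<Rightarrow> ('i \<Rightarrow> 'k) \<Rightarrow> ('i \<Rightarrow> 'k)" where
  "mat_vec I M v = (\<lambda>i. if i \<in> I then (\<Sum>j\<in>I. M (i, j) * v j) else 0)"

definition eigvecs :: "'i set \<Rightarrow> ('i \<times> 'i \<Rightarrow> 'k::field) \<Rightarrow> ('i \<Rightarrow> 'k) set" where
  "eigvecs I M = {v \<in> vecs I. v \<noteq> (\<lambda>_. 0) \<and> (\<exists>c. mat_vec I M v = (\<lambda>i. c * v i))}"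

(* semisimple (= diagonalizable over an algebraically closed field):
   the eigenvectors span the space *)
definition semisimple_on :: "'i set \<Rightarrow> ('i \<times> 'i \<Rightarrow> 'k::field) \<Rightarrow> bool" where
  "semisimple_on I M \<longleftrightarrow> fspan (eigvecs I M) = vecs I"

definition weakly_adequate ::
  "('g, 'b) monoid_scheme \<Rightarrow> 'i set \<Rightarrow> ('g \<Rightarrow> ('i \<times> 'i \<Rightarrow> 'k::field)) \<Rightarrow> bool" where
  "weakly_adequate G I \<rho> \<longleftrightarrow>
     fspan {\<rho> g | g. g \<in> carrier G \<and> semisimple_on I (\<rho> g)} = endos I"

definition sdprod ::
  "('a, 'c) monoid_scheme \<Rightarrow> ('h, 'd) monoid_scheme \<Rightarrow> ('h \<Rightarrow> 'a \<Rightarrow> 'a) \<Rightarrow> ('a \<times> 'h) monoid" where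
  "sdprod A H \<phi> = \<lparr>carrier = carrier A \<times> carrier H,
     monoid.mult = (\<lambda>(a1, h1) (a2, h2). (a1 \<otimes>\<^bsub>A\<^esub> \<phi> h1 a2, h1 \<otimes>\<^bsub>H\<^esub> h2)),
     monoid.one = (\<one>\<^bsub>A\<^esub>, \<one>\<^bsub>H\<^esub>)\<rparr>"

definition lin_chars :: "('a, 'c) monoid_scheme \<Rightarrow> ('a \<Rightarrow> 'k::field) set" where
  "lin_chars A = {lam. (\<forall>x\<in>carrier A. lam x \<noteq> 0)
      \<and> (\<forall>x\<in>carrier A. \<forall>y\<in>carrier A. lam (x \<otimes>\<^bsub>A\<^esub> y) = lam x * lam y)
      \<and> (\<forall>x. x \<notin> carrier A \<longrightarrow> lam x = 0)}"

definition char_act ::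
  "('a, 'c) monoid_scheme \<Rightarrow> ('h, 'd) monoid_scheme \<Rightarrow> ('h \<Rightarrow> 'a \<Rightarrow> 'a) \<Rightarrow> 'h \<Rightarrow> ('a \<Rightarrow> 'k::field) \<Rightarrow> ('a \<Rightarrow> 'k)" where
  "char_act A H \<phi> h lam = (\<lambda>a. if a \<in> carrier A then lam (\<phi> (inv\<^bsub>H\<^esub> h) a) else 0)"

(* lambda lies in a regular H-orbit: trivial stabilizer *)
definition regular_char ::
  "('a, 'c) monoid_scheme \<Rightarrow> ('h, 'd) monoid_scheme \<Rightarrow> ('h \<Rightarrow> 'a \<Rightarrow> 'a) \<Rightarrow> ('a \<Rightarrow> 'k::field) \<Rightarrow> bool" where
  "regular_char A H \<phi> lam \<longleftrightarrow>
     (\<forall>h\<in>carrier H. char_act A H \<phi> h lam = lam \<longrightarrow> h = \<one>\<^bsub>H\<^esub>)"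

(* Ind_A^G(W), W affording lambda, G = A \<rtimes> H, realized on the basis
   e_h = h \<otimes> w (h \<in> H, H a transversal of A in G):
   (a,h') e_j = lambda((h'j)^{-1} . a) e_{h'j}. *)
definition induced_rep ::
  "('a, 'c) monoid_scheme \<Rightarrow> ('h, 'd) monoid_scheme \<Rightarrow> ('h \<Rightarrow> 'a \<Rightarrow> 'a) \<Rightarrow> ('a \<Rightarrow> 'k::field)
     \<Rightarrow> ('a \<times> 'h) \<Rightarrow> ('h \<times> 'h \<Rightarrow> 'k)" where
  "induced_rep A H \<phi> lam g = (case g of (a, h') \<Rightarrow> (\<lambda>(i, j).
     if i \<in> carrier H \<and> j \<in> carrier H \<and> i = h' \<otimes>\<^bsub>H\<^esub> j
     then lam (\<phi> (inv\<^bsub>H\<^esub> (h' \<otimes>\<^bsub>H\<^esub> j)) a) else 0))"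

end

theory Submission
  imports Defs "HOL-Algebra.Sylow"
begin

text \<open>
  Let \<open>h\<^sub>0 \<in> H\<close> have order \<open>p\<close>. In the basis \<open>e\<^sub>h = h \<otimes> w\<close> every \<open>\<rho>(a, h')\<close> is a monomial
  matrix whose support is the graph of left translation by \<open>h'\<close>; in particular only the
  elements \<open>(a, h\<^sub>0)\<close> contribute to the \<open>(h\<^sub>0, 1)\<close> entry. For an eigenvector \<open>v\<close> of
  \<open>\<rho>(a, h\<^sub>0)\<close> with eigenvalue \<open>c\<close>, going once around the \<open>p\<close>-cycle of \<open>h\<^sub>0\<close> through \<open>1\<close>
  gives \<open>c\<^sup>p v(1) = \<pi> v(1)\<close> for a constant \<open>\<pi>\<close>, and since \<open>x \<mapsto> x\<^sup>p\<close> is injective in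
  characteristic \<open>p\<close>, all eigenvectors satisfy one linear relation between their \<open>1\<close>- and
  \<open>h\<^sub>0\<close>-coordinates that \<open>e\<^sub>1\<close> violates. So no \<open>\<rho>(a, h\<^sub>0)\<close> is semisimple, and the
  elementary matrix \<open>E\<^sub>h\<^sub>0\<^sub>,\<^sub>1\<close> is not in the span of the semisimple \<open>\<rho>(g)\<close>.
\<close>

lemma power_CHAR_inj:
  fixes x y :: "'k::field"
  assumes "prime CHAR('k)" and "x ^ CHAR('k) = y ^ CHAR('k)"
  shows "x = y"
proof -
  have "(x + (- y)) ^ CHAR('k) = x ^ CHAR('k) + (- y) ^ CHAR('k)"
    using freshmans_dream assms(1) by blast
  also have "(- y) ^ CHAR('k) = - (y ^ CHAR('k))"
    using minus_power_prime_CHAR assms(1) by blast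
  finally have "(x - y) ^ CHAR('k) = 0" using assms(2) by simp
  then show ?thesis by simp
qed

lemma (in group) exists_nontrivial_pow_prime_eq_one:
  assumes "finite (carrier G)" and "prime p" and "p dvd card (carrier G)"
  shows "\<exists>h\<in>carrier G. h \<noteq> \<one> \<and> h [^] p = \<one>"
proof -
  obtain m where "Coset.order G = p ^ 1 * m" using assms(3) by (auto simp: Coset.order_def)
  then obtain P where P: "subgroup P G" "card P = p"
    using sylow_thm[of p G 1 m] assms is_group by auto
  then have "card P \<ge> 2" using assms(2) prime_ge_2_nat by auto
  then obtain h where h: "h \<in> P" "h \<noteq> \<one>"
    by (metis One_nat_def card_le_Suc0_iff_eq[of P] not_less_eq_eq numeral_2_eq_2
        subgroup.one_closed[OF P(1)] card.infinite[of P] zero_le)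
  interpret P: group "G\<lparr>carrier := P\<rparr>" using subgroup_imp_group[OF P(1)] .
  have "h [^]\<^bsub>G\<lparr>carrier := P\<rparr>\<^esub> Coset.order (G\<lparr>carrier := P\<rparr>) = \<one>\<^bsub>G\<lparr>carrier := P\<rparr>\<^esub>"
    by (rule P.pow_order_eq_1) (simp add: h)
  then have "h [^] p = \<one>"
    using P by (simp add: Coset.order_def nat_pow_consistent[symmetric])
  then show ?thesis using h P subgroup.subset by blast
qed

lemma fspan_subset_linear_relation:
  assumes "\<forall>u\<in>S. a * u x = b * u y"
  shows "fspan S \<subseteq> {v. a * v x = b * v y}"
proof
  fix v assume "v \<in> fspan S"
  then obtain F c where F: "F \<subseteq> S" and v: "v = (\<lambda>x. \<Sum>u\<in>F. c u * u x)"
    unfolding fspan_def by blast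
  have "a * v x = (\<Sum>u\<in>F. c u * (a * u x))"
    by (simp add: v sum_distrib_left algebra_simps)
  also have "\<dots> = (\<Sum>u\<in>F. c u * (b * u y))"
    using F assms by (intro sum.cong) auto
  also have "\<dots> = b * v y"
    by (simp add: v sum_distrib_left algebra_simps)
  finally show "v \<in> {v. a * v x = b * v y}" by simp
qed

locale monomial_matrix = group H for H :: "('h, 'd) monoid_scheme" (structure) +
  fixes h :: 'h and mu :: "'h \<Rightarrow> 'k::field" and M :: "'h \<times> 'h \<Rightarrow> 'k"
  assumes h_closed: "h \<in> carrier H"
    and mu_nonzero: "i \<in> carrier H \<Longrightarrow> mu i \<noteq> 0"
    and mat_vec_eq: "i \<in> carrier H \<Longrightarrow> mat_vec (carrier H) M v i = mu i * v (inv h \<otimes> i)"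
begin

lemma eigvec_shift:
  assumes "mat_vec (carrier H) M v = (\<lambda>i. c * v i)" and "j \<in> carrier H"
  shows "c * v (h \<otimes> j) = mu (h \<otimes> j) * v j"
proof -
  have "c * v (h \<otimes> j) = mat_vec (carrier H) M v (h \<otimes> j)" using assms(1) by metis
  also have "\<dots> = mu (h \<otimes> j) * v j"
    using assms(2) h_closed by (simp add: mat_vec_eq m_assoc[symmetric])
  finally show ?thesis .
qed

lemma eigvec_shift_pow:
  assumes "mat_vec (carrier H) M v = (\<lambda>i. c * v i)"
  shows "c ^ m * v (h [^] m) = (\<Prod>t<m. mu (h [^] Suc t)) * v \<one>"
proof (induction m)
  case (Suc m)
  have "c ^ Suc m * v (h [^] Suc m) = mu (h [^] Suc m) * (c ^ m * v (h [^] m))"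
    using eigvec_shift[OF assms nat_pow_closed[OF h_closed]]
    by (simp only: nat_pow_Suc2[OF h_closed]) (simp add: algebra_simps)
  then show ?case using Suc.IH by (simp add: algebra_simps)
qed simp

lemma eigval_nonzero:
  assumes "v \<in> eigvecs (carrier H) M" and "mat_vec (carrier H) M v = (\<lambda>i. c * v i)"
  shows "c \<noteq> 0"
proof
  assume "c = 0"
  have "v j = 0" for j
  proof (cases "j \<in> carrier H")
    case True
    then show ?thesis
      using eigvec_shift[OF assms(2) True] \<open>c = 0\<close> mu_nonzero[of "h \<otimes> j"] h_closed by simp
  next
    case False
    then show ?thesis using assms(1) by (simp add: eigvecs_def vecs_def)
  qed
  then show False using assms(1) by (auto simp: eigvecs_def)
qed

text \<open>
  The \<open>p\<close>-th power map is injective, so \<open>c\<^sup>p = \<pi>\<close> pins down the eigenvalue of every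
  eigenvector not vanishing at \<open>1\<close>; this gives a relation independent of the eigenvector.
\<close>

lemma eigvecs_linear_relation:
  assumes "prime CHAR('k)" and "h [^] CHAR('k) = \<one>"
  obtains c0 where "\<forall>v\<in>eigvecs (carrier H) M. c0 * v h = mu h * v \<one>"
proof -
  define \<pi> where "\<pi> = (\<Prod>t<CHAR('k). mu (h [^] Suc t))"
  define c0 where "c0 = (SOME c. c ^ CHAR('k) = \<pi>)"
  have "\<forall>v\<in>eigvecs (carrier H) M. c0 * v h = mu h * v \<one>"
  proof
    fix v assume v: "v \<in> eigvecs (carrier H) M"
    then obtain c where ev: "mat_vec (carrier H) M v = (\<lambda>i. c * v i)"
      unfolding eigvecs_def by blast
    have rel: "c * v h = mu h * v \<one>" using eigvec_shift[OF ev, of \<one>] h_closed by simp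
    show "c0 * v h = mu h * v \<one>"
    proof (cases "v \<one> = 0")
      case True
      then show ?thesis using rel eigval_nonzero[OF v ev] by simp
    next
      case False
      have "c ^ CHAR('k) * v \<one> = \<pi> * v \<one>"
        using eigvec_shift_pow[OF ev, of "CHAR('k)"] by (simp only: assms(2) \<pi>_def)
      then have c: "c ^ CHAR('k) = \<pi>" using False by simp
      then have "c0 ^ CHAR('k) = \<pi>"
        unfolding c0_def by (rule someI)
      then have "c0 ^ CHAR('k) = c ^ CHAR('k)" using c by simp
      then have "c0 = c" by (rule power_CHAR_inj[OF assms(1)])
      then show ?thesis using rel by simp
    qed
  qed
  then show ?thesis by (rule that)
qed

lemma not_semisimple:
  assumes "prime CHAR('k)" and "h \<noteq> \<one>" and "h [^] CHAR('k) = \<one>"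
  shows "\<not> semisimple_on (carrier H) M"
proof
  assume ss: "semisimple_on (carrier H) M"
  obtain c0 where "\<forall>v\<in>eigvecs (carrier H) M. c0 * v h = mu h * v \<one>"
    using eigvecs_linear_relation assms(1,3) by blast
  then have "fspan (eigvecs (carrier H) M) \<subseteq> {v. c0 * v h = mu h * v \<one>}"
    by (rule fspan_subset_linear_relation)
  then have "vecs (carrier H) \<subseteq> {v. c0 * v h = mu h * v \<one>}"
    using ss by (simp add: semisimple_on_def)
  moreover have "(\<lambda>i. if i = \<one> then 1 else 0) \<in> vecs (carrier H)"
    by (simp add: vecs_def)
  ultimately show False using assms(2) mu_nonzero[OF h_closed] by auto
qed

end

lemma monomial_matrix_induced_rep:
  assumes "group H" and "finite (carrier H)" and act: "group_action H (carrier A) \<phi>"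
    and lam: "lam \<in> lin_chars A" and a: "a \<in> carrier A" and h: "h \<in> carrier H"
  shows "monomial_matrix H h (\<lambda>i. lam (\<phi> (inv\<^bsub>H\<^esub> i) a)) (induced_rep A H \<phi> lam (a, h))"
proof -
  interpret group H by fact
  interpret act: group_action H "carrier A" \<phi> by fact
  have mu_nonzero: "lam (\<phi> (inv\<^bsub>H\<^esub> i) a) \<noteq> 0" if "i \<in> carrier H" for i
  proof -
    have "\<phi> (inv\<^bsub>H\<^esub> i) a \<in> carrier A" using act.element_image[of "inv\<^bsub>H\<^esub> i" a] that a by auto
    then show ?thesis using lam by (auto simp: lin_chars_def)
  qed
  have mat_vec_eq: "mat_vec (carrier H) (induced_rep A H \<phi> lam (a, h)) v i
      = lam (\<phi> (inv\<^bsub>H\<^esub> i) a) * v (inv\<^bsub>H\<^esub> h \<otimes>\<^bsub>H\<^esub> i)" if i: "i \<in> carrier H" for v i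
  proof -
    have entry: "induced_rep A H \<phi> lam (a, h) (i, j) * v j
        = (if j = inv\<^bsub>H\<^esub> h \<otimes>\<^bsub>H\<^esub> i then lam (\<phi> (inv\<^bsub>H\<^esub> i) a) * v j else 0)"
      if "j \<in> carrier H" for j
      using that i h by (auto simp: induced_rep_def inv_solve_left)
    have "mat_vec (carrier H) (induced_rep A H \<phi> lam (a, h)) v i
        = (\<Sum>j\<in>carrier H. induced_rep A H \<phi> lam (a, h) (i, j) * v j)"
      using i by (simp add: mat_vec_def)
    also have "\<dots>
        = (\<Sum>j\<in>carrier H. if j = inv\<^bsub>H\<^esub> h \<otimes>\<^bsub>H\<^esub> i then lam (\<phi> (inv\<^bsub>H\<^esub> i) a) * v j else 0)"
      by (rule sum.cong) (simp_all add: entry)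
    also have "\<dots> = lam (\<phi> (inv\<^bsub>H\<^esub> i) a) * v (inv\<^bsub>H\<^esub> h \<otimes>\<^bsub>H\<^esub> i)"
      using i h assms(2) by (subst sum.delta) auto
    finally show ?thesis .
  qed
  show ?thesis
    by (intro monomial_matrix.intro monomial_matrix_axioms.intro)
      (use assms mu_nonzero mat_vec_eq in auto)
qed

lemma induced_rep_off_support:
  assumes "i \<noteq> h \<otimes>\<^bsub>H\<^esub> j"
  shows "induced_rep A H \<phi> lam (a, h) (i, j) = 0"
  using assms by (simp add: induced_rep_def)

theorem theorem5p2:
  fixes A :: "('a, 'c) monoid_scheme" and H :: "('h, 'd) monoid_scheme"
    and \<phi> :: "'h \<Rightarrow> 'a \<Rightarrow> 'a" and lam :: "'a \<Rightarrow> 'k::field"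
    and p r :: nat
  assumes k_closed: "alg_closed TYPE('k)"
    and char_p: "CHAR('k) = p" and p_pos: "p > 0"
    and H_grp: "group H" and H_fin: "finite (carrier H)"
    and p_dvd: "p dvd card (carrier H)"
    and H_gen: "generate H {h \<in> carrier H. coprime (group.ord H h) p} = carrier H"
    and r_prime: "prime r" and r_ne_p: "r \<noteq> p"
    and A_grp: "comm_group A" and A_fin: "finite (carrier A)"
    and A_elem: "\<forall>x\<in>carrier A. x [^]\<^bsub>A\<^esub> r = \<one>\<^bsub>A\<^esub>"
    and act: "group_action H (carrier A) \<phi>"
    and act_aut: "\<forall>h\<in>carrier H. \<phi> h \<in> hom A A"
    and A_nontriv: "carrier A \<noteq> {\<one>\<^bsub>A\<^esub>}"
    and A_irred: "\<forall>B. subgroup B A \<and> (\<forall>h\<in>carrier H. \<phi> h ` B \<subseteq> B)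
                     \<longrightarrow> B = {\<one>\<^bsub>A\<^esub>} \<or> B = carrier A"
    and reg_orbit: "\<exists>mu \<in> (lin_chars A :: ('a \<Rightarrow> 'k) set). regular_char A H \<phi> mu"
    and lam_char: "lam \<in> lin_chars A"
    and lam_reg: "regular_char A H \<phi> lam"
  shows "\<not> weakly_adequate (sdprod A H \<phi>) (carrier H) (induced_rep A H \<phi> lam)"
proof
  interpret H: group H by fact
  let ?\<rho> = "induced_rep A H \<phi> lam"
  have pr: "prime CHAR('k)" using prime_CHAR_semidom[where ?'a = 'k] p_pos char_p by simp
  obtain h0 where h0: "h0 \<in> carrier H" "h0 \<noteq> \<one>\<^bsub>H\<^esub>" "h0 [^]\<^bsub>H\<^esub> CHAR('k) = \<one>\<^bsub>H\<^esub>"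
    using H.exists_nontrivial_pow_prime_eq_one[OF H_fin pr] p_dvd char_p by blast
  have "?\<rho> g (h0, \<one>\<^bsub>H\<^esub>) = 0"
    if "g \<in> carrier (sdprod A H \<phi>)" and "semisimple_on (carrier H) (?\<rho> g)" for g
  proof -
    have "g \<in> carrier A \<times> carrier H" using that(1) by (simp add: sdprod_def)
    then obtain a h where g: "g = (a, h)" "a \<in> carrier A" "h \<in> carrier H" by blast
    then have "h \<noteq> h0"
      using monomial_matrix.not_semisimple[OF monomial_matrix_induced_rep, OF H_grp H_fin act
          lam_char g(2) h0(1) pr h0(2,3)] that(2) by blast
    then show ?thesis using g by (simp add: induced_rep_off_support)
  qed
  then have "fspan {?\<rho> g | g. g \<in> carrier (sdprod A H \<phi>) \<and> semisimple_on (carrier H) (?\<rho> g)}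
      \<subseteq> {M. 1 * M (h0, \<one>\<^bsub>H\<^esub>) = 0 * M (h0, \<one>\<^bsub>H\<^esub>)}"
    by (intro fspan_subset_linear_relation) auto
  moreover have "(\<lambda>x. if x = (h0, \<one>\<^bsub>H\<^esub>) then 1 else 0) \<in> endos (carrier H)"
    using h0(1) by (auto simp: endos_def)
  moreover assume "weakly_adequate (sdprod A H \<phi>) (carrier H) ?\<rho>"
  ultimately show False by (auto simp: weakly_adequate_def)
qed

end
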